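(* There exist universal constants $C,C'>0$ such that for every $m>0$, every $\beta\in(0,1/3)$, every $\epsilon\in(0,1)$, every odd $n\in\mathbb{N}$ with $n\epsilon\ge C\ln(1/\beta)$, and every $D\in\mathcal{CTM}$, setting $\alpha^*=1/(n\epsilon)$, with probability at least $1-\beta$, $$p_{\alpha^*}(D,\mathtt{DPExpMed}_{\alpha^*}(D))\le\frac{C'}{\epsilon}\ln\frac1\beta.$$
   Context: $V=[-m/2,m/2]$. A dataset is $D=(x_1,\dots,x_n)\in V^n$, indexed so that $x_1\le\dots\le x_n$, with median $\mathcal{T}(D)=x_{\lceil n/2\rceil}$. $\mathcal{CTM}$ is the set of datasets with $|x_{i+1}-x_i|\ge|x_{j+1}-x_j|$ for all $1\le i<j\le\lceil n/2\rceil-1$ and $|x_i-x_{i-1}|\ge|x_j-x_{j-1}|$ for all $\lceil n/2\rceil+1\le j<i\le n$. The percentile loss $q(D,a)$ for $a\in V$ is: $\min\{|\lceil n/2\rceil-i|: a\in[x_i,\mathcal{T}(D)]\}$ if $a\in[x_1,\mathcal{T}(D)]$; $\min\{|\lceil n/2\rceil-i|: a\in[\mathcal{T}(D),x_i]\}$ if $a\in(\mathcal{T}(D),x_n]$; $\lceil n/2\rceil$ otherwise. The widened loss is $p_\alpha(D,\ell)=\min_{a\in V:|a-\ell|\le\alpha m}q(D,a)$. $\mathtt{DPExpMed}_\alpha(D)$ is the random point of $V$ with density proportional to $\exp(-\frac{\epsilon}{2}p_\alpha(D,\ell))$. *)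

theory Defs
  imports "HOL-Analysis.Analysis"
begin

text \<open>A dataset of size n is a function x :: nat => real on indices 1..n
  (values outside are irrelevant), sorted, with values in V = [-m/2, m/2].\<close>

definition Vset :: "real \<Rightarrow> real set" where
  "Vset m = {-m/2 .. m/2}"

definition midx :: "nat \<Rightarrow> nat" where
  "midx n = nat \<lceil>real n / 2\<rceil>"

definition is_dataset :: "real \<Rightarrow> nat \<Rightarrow> (nat \<Rightarrow> real) \<Rightarrow> bool" where
  "is_dataset m n x \<longleftrightarrow> (\<forall>i\<in>{1..n}. x i \<in> Vset m) \<and>
     (\<forall>i j. 1 \<le> i \<longrightarrow> i \<le> j \<longrightarrow> j \<le> n \<longrightarrow> x i \<le> x j)"

definition median :: "nat \<Rightarrow> (nat \<Rightarrow> real) \<Rightarrow> real" where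
  "median n x = x (midx n)"

definition in_CTM :: "real \<Rightarrow> nat \<Rightarrow> (nat \<Rightarrow> real) \<Rightarrow> bool" where
  "in_CTM m n x \<longleftrightarrow> is_dataset m n x \<and>
     (\<forall>i j. 1 \<le> i \<longrightarrow> i < j \<longrightarrow> j \<le> midx n - 1 \<longrightarrow>
        \<bar>x (i+1) - x i\<bar> \<ge> \<bar>x (j+1) - x j\<bar>) \<and>
     (\<forall>i j. midx n + 1 \<le> j \<longrightarrow> j < i \<longrightarrow> i \<le> n \<longrightarrow>
        \<bar>x i - x (i-1)\<bar> \<ge> \<bar>x j - x (j-1)\<bar>)"

definition idist :: "nat \<Rightarrow> nat \<Rightarrow> nat" where
  "idist k i = nat \<bar>int k - int i\<bar>"

definition qloss :: "nat \<Rightarrow> (nat \<Rightarrow> real) \<Rightarrow> real \<Rightarrow> nat" where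
  "qloss n x a =
    (if x 1 \<le> a \<and> a \<le> median n x then
       Min {idist (midx n) i | i. i \<in> {1..n} \<and> x i \<le> a \<and> a \<le> median n x}
     else if median n x < a \<and> a \<le> x n then
       Min {idist (midx n) i | i. i \<in> {1..n} \<and> median n x \<le> a \<and> a \<le> x i}
     else midx n)"

definition ploss :: "real \<Rightarrow> nat \<Rightarrow> (nat \<Rightarrow> real) \<Rightarrow> real \<Rightarrow> real \<Rightarrow> nat" where
  "ploss m n x \<alpha> l = Inf {qloss n x a | a. a \<in> Vset m \<and> \<bar>a - l\<bar> \<le> \<alpha> * m}"

text \<open>Unnormalised density of DPExpMed_alpha(D) on V.\<close>
definition expmed_weight :: "real \<Rightarrow> real \<Rightarrow> nat \<Rightarrow> (nat \<Rightarrow> real) \<Rightarrow> real \<Rightarrow> real \<Rightarrow> real" where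
  "expmed_weight \<epsilon> m n x \<alpha> l = exp (- (\<epsilon> / 2) * real (ploss m n x \<alpha> l))"

text \<open>Probability that DPExpMed_alpha(D) lies in S (density normalised over V).\<close>
definition expmed_prob ::
  "real \<Rightarrow> real \<Rightarrow> nat \<Rightarrow> (nat \<Rightarrow> real) \<Rightarrow> real \<Rightarrow> real set \<Rightarrow> real" where
  "expmed_prob \<epsilon> m n x \<alpha> S =
     integral (Vset m \<inter> S) (expmed_weight \<epsilon> m n x \<alpha>) / integral (Vset m) (expmed_weight \<epsilon> m n x \<alpha>)"

end

theory Submission
  imports Defs
begin

(* Write k = midx n, so n = 2k - 1.  The CTM condition says that the gaps between consecutive
   data points shrink towards the median; hence the j gaps next to the median cover at most a
   j/(k - 1) fraction of the data range, which is at most m.  So the percentile loss of a point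
   at distance d from the median is at least (k - 1) d / m, and the widened loss is at least
   (k - 1) (d - alpha m) / m, while it vanishes within alpha m of the median.  The weight
   exp (-eps/2 p) therefore has mass at least alpha m = m / (n eps) on V, whereas the points of
   loss above T = 20 ln(1/beta) / eps carry mass at most
   exp (-eps T / 4) (2 alpha m + 8 m / (eps (k - 1))) = beta^5 (2 alpha m + 8 m / (eps (k - 1))),
   a beta fraction of the former once n eps >= 2 ln(1/beta). *)

lemma sum_head_average_le:
  fixes g :: "nat \<Rightarrow> real"
  assumes mono: "\<And>i j. a \<le> i \<Longrightarrow> i \<le> j \<Longrightarrow> j < b \<Longrightarrow> g i \<le> g j"
    and s: "a \<le> s" "s \<le> b"
  shows "real (b - a) * (\<Sum>i=a..<s. g i) \<le> real (s - a) * (\<Sum>i=a..<b. g i)"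
proof -
  define H where "H = (\<Sum>i=a..<s. g i)"
  define T where "T = (\<Sum>j=s..<b. g j)"
  have "real (b - s) * H = (\<Sum>i=a..<s. \<Sum>j=s..<b. g i)"
    by (simp add: H_def sum_distrib_left mult.commute)
  also have "\<dots> \<le> (\<Sum>i=a..<s. \<Sum>j=s..<b. g j)"
    using mono by (intro sum_mono) auto
  also have "\<dots> = real (s - a) * T"
    by (simp add: T_def)
  finally have "real (b - s) * H \<le> real (s - a) * T" .
  moreover have "(\<Sum>i=a..<b. g i) = H + T"
    unfolding H_def T_def using s by (simp add: sum.atLeastLessThan_concat)
  moreover have "real (b - a) = real (s - a) + real (b - s)"
    using s by simp
  ultimately show ?thesis
    unfolding H_def[symmetric] by (simp add: algebra_simps)
qed

lemma Inf_window_antitone: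
  fixes q :: "real \<Rightarrow> nat"
  assumes q: "\<And>a a'. a \<le> a' \<Longrightarrow> a' \<le> c \<Longrightarrow> q a' \<le> q a"
    and "0 \<le> r" and ll: "l \<le> l'" "l' \<le> c" and lS: "l \<in> {lo..hi}" "l' \<in> {lo..hi}"
  shows "Inf {q a | a. a \<in> {lo..hi} \<and> \<bar>a - l'\<bar> \<le> r} \<le> Inf {q a | a. a \<in> {lo..hi} \<and> \<bar>a - l\<bar> \<le> r}"
proof -
  let ?W = "\<lambda>l. {q a | a. a \<in> {lo..hi} \<and> \<bar>a - l\<bar> \<le> r}"
  have "Inf (?W l) \<in> ?W l" using lS \<open>0 \<le> r\<close> by (intro Inf_nat_def1) auto
  then obtain a where a: "a \<in> {lo..hi}" "\<bar>a - l\<bar> \<le> r" "Inf (?W l) = q a" by auto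
  show ?thesis
  proof (cases "\<bar>a - l'\<bar> \<le> r")
    case True
    then show ?thesis using a by (intro cInf_lower) auto
  next
    case False
    then have "a < l' - r" using a ll by auto
    then have "Inf (?W l') \<le> q (l' - r)"
      using a lS \<open>0 \<le> r\<close> by (intro cInf_lower) auto
    also have "\<dots> \<le> q a"
      using \<open>a < l' - r\<close> \<open>0 \<le> r\<close> ll by (intro q) auto
    finally show ?thesis using a by simp
  qed
qed

lemma integrable_on_unimodal:
  fixes f :: "real \<Rightarrow> real"
  assumes "a \<le> c" "c \<le> b" "mono_on {a..c} f" "antimono_on {c..b} f"
  shows "f integrable_on {a..b}"
proof -
  have "f integrable_on {a..c}"
    using assms(3) by (rule integrable_on_mono_on)
  moreover have "(\<lambda>l. - f l) integrable_on {c..b}"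
    using assms(4) by (intro integrable_on_mono_on) (auto simp: monotone_on_def)
  then have "f integrable_on {c..b}"
    using integrable_neg by fastforce
  ultimately show ?thesis
    by (rule Henstock_Kurzweil_Integration.integrable_combine[OF assms(1,2)])
qed

lemma integrable_on_sublevel_unimodal:
  fixes p \<phi> :: "real \<Rightarrow> real"
  assumes "a \<le> c" "c \<le> b" and p: "antimono_on {a..c} p" "mono_on {c..b} p"
    and \<phi>: "antimono \<phi>" "\<And>t. \<phi> t \<ge> 0"
  shows "(\<lambda>l. \<phi> (p l)) integrable_on {a..b}"
    and "(\<lambda>l. \<phi> (p l)) integrable_on {a..b} \<inter> {l. p l \<le> T}"
proof -
  show "(\<lambda>l. \<phi> (p l)) integrable_on {a..b}"
    using assms by (intro integrable_on_unimodal[of a c b])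
      (auto simp: monotone_on_def dest: antimonoD)
  define h where "h l = (if l \<in> {l. p l \<le> T} then \<phi> (p l) else 0)" for l
  have h: "h l \<le> h l'" if "p l' \<le> p l" for l l'
    using that \<phi> by (auto simp: h_def dest: antimonoD)
  have "h integrable_on {a..b}"
    using assms(1,2) p by (intro integrable_on_unimodal[of a c b]) (auto simp: monotone_on_def intro: h)
  then show "(\<lambda>l. \<phi> (p l)) integrable_on {a..b} \<inter> {l. p l \<le> T}"
    unfolding h_def integrable_restrict_Int by (simp add: Int_commute)
qed

lemma has_integral_exp_decay:
  fixes c R a :: real
  assumes "c > 0" "R \<ge> 0"
  shows "((\<lambda>l. exp (- c * (l - a))) has_integral (1 - exp (- c * R)) / c) {a..a + R}"
proof -
  have "((\<lambda>l. exp (- c * (l - a))) has_integral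
      (- exp (- c * (a + R - a)) / c) - (- exp (- c * (a - a)) / c)) {a..a + R}"
  proof (rule fundamental_theorem_of_calculus)
    fix l
    have "((\<lambda>l. - exp (- c * (l - a)) / c) has_real_derivative
        - (exp (- c * (l - a)) * (- c)) / c) (at l within {a..a + R})"
      by (auto intro!: derivative_eq_intros)
    then show "((\<lambda>l. - exp (- c * (l - a)) / c) has_vector_derivative exp (- c * (l - a)))
        (at l within {a..a + R})"
      using \<open>c > 0\<close> by (simp add: has_real_derivative_iff_has_vector_derivative)
  qed (use \<open>R \<ge> 0\<close> in simp)
  then show ?thesis by (simp add: diff_divide_distrib)
qed

lemma integral_exp_tent_le:
  fixes c A x0 :: real
  assumes c: "c > 0" and A: "A \<ge> 0"
  shows "integral {lo..hi} (\<lambda>l. exp (- c * max 0 (\<bar>l - x0\<bar> - A))) \<le> 2 * A + 2 / c"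
proof -
  define a where "a = x0 - A"
  define b where "b = x0 + A"
  define R where "R = max 0 (max (a - lo) (hi - b))"
  define u where "u = (\<lambda>l. exp (- c * max 0 (\<bar>l - x0\<bar> - A)))"
  have R: "R \<ge> 0" unfolding R_def by simp
  have dist: "max 0 (\<bar>l - x0\<bar> - A) = (if l \<le> a then a - l else if l \<le> b then 0 else l - b)" for l
    using A unfolding a_def b_def by (cases "l \<le> x0") (auto simp: max_def)
  have "((\<lambda>l. exp (- c * (l - - a))) has_integral (1 - exp (- c * R)) / c) {- a..- a + R}"
    using c R by (rule has_integral_exp_decay)
  then have "((\<lambda>l. exp (- c * (- l - - a))) has_integral (1 - exp (- c * R)) / c) {- (- a + R)..- (- a)}"
    by (rule has_integral_reflect_real[THEN iffD2])
  then have "((\<lambda>l. exp (- c * (- l - - a))) has_integral (1 - exp (- c * R)) / c) {a - R..a}"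
    by simp
  then have left: "(u has_integral (1 - exp (- c * R)) / c) {a - R..a}"
    by (rule has_integral_eq[rotated]) (simp add: u_def dist)
  have "((\<lambda>l. 1) has_integral 2 * A) {a..b}"
    using has_integral_const_real[of "1::real" a b] A by (simp add: a_def b_def)
  then have mid: "(u has_integral 2 * A) {a..b}"
    by (rule has_integral_eq[rotated]) (auto simp: u_def dist)
  have "((\<lambda>l. exp (- c * (l - b))) has_integral (1 - exp (- c * R)) / c) {b..b + R}"
    using c R by (rule has_integral_exp_decay)
  then have right: "(u has_integral (1 - exp (- c * R)) / c) {b..b + R}"
    by (rule has_integral_eq[rotated]) (use A in \<open>auto simp: u_def dist a_def b_def\<close>)
  have ab: "a - R \<le> a" "a \<le> b" "b \<le> b + R"
    using R A unfolding a_def b_def by auto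
  have "(u has_integral (1 - exp (- c * R)) / c + 2 * A + (1 - exp (- c * R)) / c) {a - R..b + R}"
    using ab by (intro has_integral_combine[OF _ ab(3) has_integral_combine[OF ab(1,2) left mid] right]) simp
  then have "integral {a - R..b + R} u = (1 - exp (- c * R)) / c + 2 * A + (1 - exp (- c * R)) / c"
    by (rule integral_unique)
  moreover have "integral {lo..hi} u \<le> integral {a - R..b + R} u"
  proof (rule integral_subset_le)
    have "a - R \<le> lo" "hi \<le> b + R"
      unfolding R_def by linarith+
    then show "{lo..hi} \<subseteq> {a - R..b + R}"
      by auto
    have "continuous_on UNIV u" unfolding u_def by (intro continuous_intros)
    then show "u integrable_on {lo..hi}" "u integrable_on {a - R..b + R}"
      by (auto intro: integrable_continuous_interval continuous_on_subset)
  qed (simp add: u_def)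
  moreover have "(1 - exp (- c * R)) / c \<le> 1 / c"
    using c by (intro divide_right_mono) auto
  moreover have "2 / c = 1 / c + 1 / c"
    by simp
  ultimately have "integral {lo..hi} u \<le> 2 * A + 2 / c"
    by linarith
  then show ?thesis
    unfolding u_def .
qed

lemma two_midx_odd:
  assumes "odd n" shows "2 * midx n = n + 1"
proof -
  obtain t where t: "n = 2 * t + 1" using assms oddE by blast
  have "\<lceil>real n / 2\<rceil> = int t + 1"
    unfolding t by (intro ceiling_unique) auto
  then show ?thesis unfolding midx_def t by simp
qed

lemma midx_bounds: "odd n \<Longrightarrow> 1 \<le> midx n \<and> midx n \<le> n"
  using two_midx_odd by fastforce

lemma is_dataset_mono:
  "is_dataset m n x \<Longrightarrow> 1 \<le> i \<Longrightarrow> i \<le> j \<Longrightarrow> j \<le> n \<Longrightarrow> x i \<le> x j"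
  unfolding is_dataset_def by blast

lemma is_dataset_in_Vset:
  "is_dataset m n x \<Longrightarrow> 1 \<le> i \<Longrightarrow> i \<le> n \<Longrightarrow> x i \<in> Vset m"
  unfolding is_dataset_def by auto

lemma in_CTM_gaps_antitone_left:
  assumes ctm: "in_CTM m n x" and "odd n" and ij: "1 \<le> i" "i \<le> j" "j < midx n"
  shows "x (Suc j) - x j \<le> x (Suc i) - x i"
proof (cases "i = j")
  case False
  have ds: "is_dataset m n x" using ctm in_CTM_def by blast
  have "x i \<le> x (Suc i)" "x j \<le> x (Suc j)"
    using ij two_midx_odd[OF \<open>odd n\<close>] by (auto intro: is_dataset_mono[OF ds])
  moreover have "\<bar>x (j+1) - x j\<bar> \<le> \<bar>x (i+1) - x i\<bar>"
    using ctm ij False unfolding in_CTM_def by simp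
  ultimately show ?thesis by simp
qed simp

lemma in_CTM_gaps_mono_right:
  assumes ctm: "in_CTM m n x" and "odd n" and ij: "midx n \<le> i" "i \<le> j" "j < n"
  shows "x (Suc i) - x i \<le> x (Suc j) - x j"
proof (cases "i = j")
  case False
  have ds: "is_dataset m n x" using ctm in_CTM_def by blast
  have gaps: "\<And>a b. midx n + 1 \<le> b \<Longrightarrow> b < a \<Longrightarrow> a \<le> n \<Longrightarrow> \<bar>x b - x (b - 1)\<bar> \<le> \<bar>x a - x (a - 1)\<bar>"
    using ctm unfolding in_CTM_def by blast
  have "x i \<le> x (Suc i)" "x j \<le> x (Suc j)"
    using ij two_midx_odd[OF \<open>odd n\<close>] by (auto intro: is_dataset_mono[OF ds])
  moreover have "\<bar>x (Suc i) - x (Suc i - 1)\<bar> \<le> \<bar>x (Suc j) - x (Suc j - 1)\<bar>"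
    using ij False by (intro gaps) auto
  ultimately show ?thesis by simp
qed simp

lemma in_CTM_left_chord:
  assumes ctm: "in_CTM m n x" and "odd n" and j: "j \<le> midx n - 1"
  shows "real (midx n - 1) * (x (midx n) - x (midx n - j)) \<le> real j * (x (midx n) - x 1)"
proof -
  define k where "k = midx n"
  have k: "1 \<le> k" using two_midx_odd[OF \<open>odd n\<close>] k_def by simp
  have "(\<Sum>i=1..<k - j. x i - x (Suc i)) = x 1 - x (k - j)" "(\<Sum>i=1..<k. x i - x (Suc i)) = x 1 - x k"
    using sum_Suc_diff'[of 1 _ "\<lambda>i. - x i"] j k k_def by auto
  moreover have "real (k - 1) * (\<Sum>i=1..<k - j. x i - x (Suc i)) \<le> real (k - j - 1) * (\<Sum>i=1..<k. x i - x (Suc i))"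
  proof (rule sum_head_average_le)
    fix i i' assume "1 \<le> i" "i \<le> i'" "i' < k"
    then show "x i - x (Suc i) \<le> x i' - x (Suc i')"
      using in_CTM_gaps_antitone_left[OF ctm \<open>odd n\<close>, of i i'] by (simp add: k_def)
  qed (use j k k_def in auto)
  moreover have "real (k - j - 1) = real (k - 1) - real j"
    using j k by (simp add: k_def)
  ultimately have "real (k - 1) * (x 1 - x (k - j)) \<le> (real (k - 1) - real j) * (x 1 - x k)"
    by simp
  then show ?thesis
    by (simp add: k_def algebra_simps)
qed

lemma in_CTM_right_chord:
  assumes ctm: "in_CTM m n x" and "odd n" and j: "j \<le> midx n - 1"
  shows "real (midx n - 1) * (x (midx n + j) - x (midx n)) \<le> real j * (x n - x (midx n))"
proof -
  define k where "k = midx n"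
  have kn: "2 * k = n + 1" using two_midx_odd[OF \<open>odd n\<close>] k_def by simp
  then have n: "n - k = k - 1" by simp
  have "real (n - k) * (\<Sum>i=k..<k + j. x (Suc i) - x i) \<le> real (k + j - k) * (\<Sum>i=k..<n. x (Suc i) - x i)"
    using in_CTM_gaps_mono_right[OF ctm \<open>odd n\<close>] j kn
    by (intro sum_head_average_le) (auto simp: k_def)
  then show ?thesis
    using j n kn by (simp add: k_def sum_Suc_diff')
qed

lemma finite_idist_image: "finite {idist k i | i. i \<in> {1..n} \<and> P i}"
  by (rule finite_subset[of _ "idist k ` {1..n}"]) auto

lemma qloss_le_midx:
  assumes "odd n" shows "qloss n x a \<le> midx n"
proof -
  let ?L = "{idist (midx n) i | i. i \<in> {1..n} \<and> x i \<le> a \<and> a \<le> median n x}"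
  let ?R = "{idist (midx n) i | i. i \<in> {1..n} \<and> median n x \<le> a \<and> a \<le> x i}"
  have k: "1 \<le> midx n" "midx n \<le> n" using midx_bounds[OF assms] by auto
  have "x 1 \<le> a \<and> a \<le> median n x \<Longrightarrow> Min ?L \<le> idist (midx n) 1"
    using k by (intro Min_le finite_idist_image) auto
  moreover have "median n x < a \<and> a \<le> x n \<Longrightarrow> Min ?R \<le> idist (midx n) n"
    using k by (intro Min_le finite_idist_image) auto
  moreover have "idist (midx n) 1 \<le> midx n" "idist (midx n) n \<le> midx n"
    using k two_midx_odd[OF assms] unfolding idist_def by auto
  ultimately show ?thesis
    unfolding qloss_def by auto
qed

lemma qloss_median:
  assumes ds: "is_dataset m n x" and "odd n"
  shows "qloss n x (x (midx n)) = 0"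
proof -
  let ?k = "midx n"
  have k: "1 \<le> ?k" "?k \<le> n" using midx_bounds[OF \<open>odd n\<close>] by auto
  have left: "x 1 \<le> x ?k \<and> x ?k \<le> median n x"
    using is_dataset_mono[OF ds, of 1 ?k] k unfolding median_def by simp
  have "Min {idist ?k i | i. i \<in> {1..n} \<and> x i \<le> x ?k \<and> x ?k \<le> median n x} \<le> idist ?k ?k"
    using left k by (intro Min_le finite_idist_image) auto
  then show ?thesis
    using left unfolding qloss_def idist_def by simp
qed

lemma qloss_antitone_left:
  assumes "odd n" and "a \<le> a'" "a' \<le> x (midx n)"
  shows "qloss n x a' \<le> qloss n x a"
proof (cases "x 1 \<le> a")
  case True
  let ?S = "\<lambda>a. {idist (midx n) i | i. i \<in> {1..n} \<and> x i \<le> a \<and> a \<le> median n x}"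
  have k: "1 \<le> midx n" "midx n \<le> n" using midx_bounds[OF \<open>odd n\<close>] by auto
  have "idist (midx n) 1 \<in> ?S a"
    using True assms k unfolding median_def by auto
  then have "Min (?S a') \<le> Min (?S a)"
    using assms unfolding median_def
    by (intro Min_antimono finite_idist_image) auto
  then show ?thesis
    using True assms unfolding qloss_def median_def by simp
next
  case False
  then have "qloss n x a = midx n"
    using assms unfolding qloss_def median_def by auto
  then show ?thesis
    using qloss_le_midx[OF \<open>odd n\<close>] by simp
qed

lemma qloss_mono_right:
  assumes ds: "is_dataset m n x" and "odd n" and "a \<le> a'" "x (midx n) \<le> a"
  shows "qloss n x a \<le> qloss n x a'"
proof (cases "a = x (midx n)")
  case True
  then show ?thesis using qloss_median[OF ds \<open>odd n\<close>] by simp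
next
  case False
  show ?thesis
  proof (cases "a' \<le> x n")
    case True
    let ?S = "\<lambda>a. {idist (midx n) i | i. i \<in> {1..n} \<and> median n x \<le> a \<and> a \<le> x i}"
    have k: "1 \<le> midx n" "midx n \<le> n" using midx_bounds[OF \<open>odd n\<close>] by auto
    have "Min (?S a) \<le> Min (?S a')"
      using True False assms k unfolding median_def
      by (intro Min_antimono finite_idist_image) auto
    then show ?thesis
      using True False assms unfolding qloss_def median_def by simp
  next
    case beyond: False
    then have "qloss n x a' = midx n"
      using assms False unfolding qloss_def median_def by auto
    then show ?thesis
      using qloss_le_midx[OF \<open>odd n\<close>] by simp
  qed
qed

lemma qloss_left_witness:
  assumes ds: "is_dataset m n x" and "odd n" and a: "a < x (midx n)" and q: "qloss n x a < midx n"
  shows "x (midx n - qloss n x a) \<le> a"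
proof -
  let ?S = "{idist (midx n) i | i. i \<in> {1..n} \<and> x i \<le> a \<and> a \<le> median n x}"
  have k: "1 \<le> midx n" "midx n \<le> n" using midx_bounds[OF \<open>odd n\<close>] by auto
  have range: "x 1 \<le> a \<and> a \<le> median n x"
    using q a unfolding qloss_def median_def by (auto split: if_splits)
  then have "idist (midx n) 1 \<in> ?S" using k by auto
  then have "Min ?S \<in> ?S" by (intro Min_in finite_idist_image) auto
  then have "qloss n x a \<in> ?S"
    using range unfolding qloss_def by simp
  then obtain i where i: "i \<in> {1..n}" "x i \<le> a" "qloss n x a = idist (midx n) i" by auto
  have "i < midx n"
    using i a is_dataset_mono[OF ds, of "midx n" i] k by (cases "i < midx n") auto
  then have "midx n - qloss n x a = i" using i unfolding idist_def by simp
  then show ?thesis using i by simp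
qed

lemma qloss_right_witness:
  assumes ds: "is_dataset m n x" and "odd n" and a: "x (midx n) < a" and q: "qloss n x a < midx n"
  shows "a \<le> x (midx n + qloss n x a)"
proof -
  let ?S = "{idist (midx n) i | i. i \<in> {1..n} \<and> median n x \<le> a \<and> a \<le> x i}"
  have k: "1 \<le> midx n" "midx n \<le> n" using midx_bounds[OF \<open>odd n\<close>] by auto
  have range: "median n x < a \<and> a \<le> x n"
    using q a unfolding qloss_def median_def by (auto split: if_splits)
  then have "?S \<noteq> {}" using k by auto
  then have "Min ?S \<in> ?S" by (intro Min_in finite_idist_image)
  then have "qloss n x a \<in> ?S"
    using range a unfolding qloss_def median_def by simp
  then obtain i where i: "i \<in> {1..n}" "a \<le> x i" "qloss n x a = idist (midx n) i" by auto
  have "midx n < i"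
    using i a is_dataset_mono[OF ds, of i "midx n"] k by (cases "midx n < i") auto
  then have "midx n + qloss n x a = i" using i unfolding idist_def by simp
  then show ?thesis using i by simp
qed

lemma qloss_lower_bound:
  assumes ctm: "in_CTM m n x" and "odd n" and aV: "a \<in> Vset m"
  shows "real (midx n - 1) * \<bar>a - x (midx n)\<bar> \<le> real (qloss n x a) * m"
proof -
  define k where "k = midx n"
  define j where "j = qloss n x a"
  have ds: "is_dataset m n x" using ctm in_CTM_def by blast
  have k: "1 \<le> k" "k \<le> n" using midx_bounds[OF \<open>odd n\<close>] k_def by auto
  have xV: "x 1 \<in> Vset m" "x k \<in> Vset m" "x n \<in> Vset m"
    using is_dataset_in_Vset[OF ds] k by auto
  then have m: "\<bar>a - x k\<bar> \<le> m" "x k - x 1 \<le> m" "x n - x k \<le> m"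
    using aV unfolding Vset_def by auto
  consider "j = k" | "a = x k" | "j < k" "a < x k" | "j < k" "x k < a"
    using qloss_le_midx[OF \<open>odd n\<close>, of x a] j_def k_def by fastforce
  then show ?thesis
  proof cases
    case 1
    have "real (k - 1) * \<bar>a - x k\<bar> \<le> real k * m"
      using m k by (intro mult_mono) auto
    then show ?thesis using 1 j_def k_def by simp
  next
    case 2
    then show ?thesis using m k_def by simp
  next
    case 3
    have "real (k - 1) * \<bar>a - x k\<bar> \<le> real (k - 1) * (x k - x (k - j))"
      using 3 qloss_left_witness[OF ds \<open>odd n\<close>] j_def k_def by (intro mult_left_mono) auto
    also have "\<dots> \<le> real j * (x k - x 1)"
      using in_CTM_left_chord[OF ctm \<open>odd n\<close>, of j] 3 k_def by simp
    also have "\<dots> \<le> real j * m"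
      using m by (intro mult_left_mono) auto
    finally show ?thesis using j_def k_def by simp
  next
    case 4
    have "real (k - 1) * \<bar>a - x k\<bar> \<le> real (k - 1) * (x (k + j) - x k)"
      using 4 qloss_right_witness[OF ds \<open>odd n\<close>] j_def k_def by (intro mult_left_mono) auto
    also have "\<dots> \<le> real j * (x n - x k)"
      using in_CTM_right_chord[OF ctm \<open>odd n\<close>, of j] 4 k_def by simp
    also have "\<dots> \<le> real j * m"
      using m by (intro mult_left_mono) auto
    finally show ?thesis using j_def k_def by simp
  qed
qed

lemma ploss_le_qloss:
  assumes "a \<in> Vset m" "\<bar>a - l\<bar> \<le> \<alpha> * m"
  shows "ploss m n x \<alpha> l \<le> qloss n x a"
  unfolding ploss_def by (rule cInf_lower) (use assms in auto)

lemma ploss_attained: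
  assumes "l \<in> Vset m" "\<alpha> * m \<ge> 0"
  obtains a where "a \<in> Vset m" "\<bar>a - l\<bar> \<le> \<alpha> * m" "ploss m n x \<alpha> l = qloss n x a"
proof -
  let ?S = "{qloss n x a | a. a \<in> Vset m \<and> \<bar>a - l\<bar> \<le> \<alpha> * m}"
  have "Inf ?S \<in> ?S" using assms by (intro Inf_nat_def1) auto
  then show ?thesis using that unfolding ploss_def by auto
qed

lemma ploss_near_median:
  assumes ds: "is_dataset m n x" and "odd n" and l: "\<bar>l - x (midx n)\<bar> \<le> \<alpha> * m"
  shows "ploss m n x \<alpha> l = 0"
proof -
  have "x (midx n) \<in> Vset m"
    using is_dataset_in_Vset[OF ds] midx_bounds[OF \<open>odd n\<close>] by simp
  then have "ploss m n x \<alpha> l \<le> qloss n x (x (midx n))"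
    using l by (intro ploss_le_qloss) auto
  then show ?thesis using qloss_median[OF ds \<open>odd n\<close>] by simp
qed

lemma ploss_lower_bound:
  assumes ctm: "in_CTM m n x" and "odd n" and "\<alpha> * m \<ge> 0" and lV: "l \<in> Vset m"
  shows "real (midx n - 1) * (\<bar>l - x (midx n)\<bar> - \<alpha> * m) \<le> real (ploss m n x \<alpha> l) * m"
proof -
  obtain a where a: "a \<in> Vset m" "\<bar>a - l\<bar> \<le> \<alpha> * m" "ploss m n x \<alpha> l = qloss n x a"
    using ploss_attained[OF lV \<open>\<alpha> * m \<ge> 0\<close>] by blast
  have "real (midx n - 1) * (\<bar>l - x (midx n)\<bar> - \<alpha> * m) \<le> real (midx n - 1) * \<bar>a - x (midx n)\<bar>"
    using a(2) by (intro mult_left_mono) auto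
  also have "\<dots> \<le> real (ploss m n x \<alpha> l) * m"
    using qloss_lower_bound[OF ctm \<open>odd n\<close> a(1)] a(3) by simp
  finally show ?thesis .
qed

lemma ploss_antitone_left:
  assumes "odd n" and "\<alpha> * m \<ge> 0" and "l \<le> l'" "l' \<le> x (midx n)" "l \<in> Vset m" "l' \<in> Vset m"
  shows "ploss m n x \<alpha> l' \<le> ploss m n x \<alpha> l"
  using assms unfolding ploss_def Vset_def
  by (intro Inf_window_antitone[where c = "x (midx n)"] qloss_antitone_left) auto

lemma ploss_mono_right:
  assumes ds: "is_dataset m n x" and "odd n" and "\<alpha> * m \<ge> 0"
    and "l \<le> l'" "x (midx n) \<le> l" "l \<in> Vset m" "l' \<in> Vset m"
  shows "ploss m n x \<alpha> l \<le> ploss m n x \<alpha> l'"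
proof -
  \<comment> \<open>Since V is symmetric, reflecting a to - a turns this into the left-hand case.\<close>
  have reflect: "{qloss n x a | a. a \<in> Vset m \<and> \<bar>a - l\<bar> \<le> \<alpha> * m}
      = {qloss n x (- a) | a. a \<in> Vset m \<and> \<bar>a - - l\<bar> \<le> \<alpha> * m}" for l
  proof (intro set_eqI iffI; clarify)
    fix a assume "a \<in> Vset m" "\<bar>a - l\<bar> \<le> \<alpha> * m"
    then show "\<exists>b. qloss n x a = qloss n x (- b) \<and> b \<in> Vset m \<and> \<bar>b - - l\<bar> \<le> \<alpha> * m"
      by (intro exI[of _ "- a"]) (auto simp: Vset_def)
  next
    fix a assume "a \<in> Vset m" "\<bar>a - - l\<bar> \<le> \<alpha> * m"
    then show "\<exists>b. qloss n x (- a) = qloss n x b \<and> b \<in> Vset m \<and> \<bar>b - l\<bar> \<le> \<alpha> * m"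
      by (intro exI[of _ "- a"]) (auto simp: Vset_def)
  qed
  show ?thesis
    using assms unfolding ploss_def reflect unfolding Vset_def
    by (intro Inf_window_antitone[where c = "- x (midx n)"] qloss_mono_right[OF ds \<open>odd n\<close>]) auto
qed

lemma expmed_weight_integrable:
  assumes ds: "is_dataset m n x" and "odd n" and "\<alpha> * m \<ge> 0" and "\<epsilon> \<ge> 0"
  shows "expmed_weight \<epsilon> m n x \<alpha> integrable_on Vset m"
    and "expmed_weight \<epsilon> m n x \<alpha> integrable_on Vset m \<inter> {l. real (ploss m n x \<alpha> l) \<le> T}"
proof -
  let ?p = "\<lambda>l. real (ploss m n x \<alpha> l)" and ?xk = "x (midx n)"
  have xk: "?xk \<in> {- m / 2..m / 2}"
    using is_dataset_in_Vset[OF ds] midx_bounds[OF \<open>odd n\<close>] by (simp add: Vset_def)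
  have "antimono_on {- m / 2..?xk} ?p"
    using assms xk by (auto simp: monotone_on_def Vset_def intro!: ploss_antitone_left)
  moreover have "mono_on {?xk..m / 2} ?p"
    using assms xk by (auto simp: monotone_on_def Vset_def intro!: ploss_mono_right)
  moreover have "antimono (\<lambda>t. exp (- (\<epsilon> / 2) * t))"
    using \<open>\<epsilon> \<ge> 0\<close> by (intro antimonoI) (simp add: mult_left_mono)
  ultimately have "(\<lambda>l. exp (- (\<epsilon> / 2) * ?p l)) integrable_on {- m / 2..m / 2}"
    "(\<lambda>l. exp (- (\<epsilon> / 2) * ?p l)) integrable_on {- m / 2..m / 2} \<inter> {l. ?p l \<le> T}"
    using xk by (intro integrable_on_sublevel_unimodal[of _ ?xk]; simp)+
  then show "expmed_weight \<epsilon> m n x \<alpha> integrable_on Vset m"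
    "expmed_weight \<epsilon> m n x \<alpha> integrable_on Vset m \<inter> {l. ?p l \<le> T}"
    unfolding expmed_weight_def Vset_def by simp_all
qed

lemma integral_expmed_weight_ge:
  assumes ds: "is_dataset m n x" and "odd n" and A: "0 \<le> \<alpha> * m" "\<alpha> * m \<le> m" and "\<epsilon> \<ge> 0"
  shows "\<alpha> * m \<le> integral (Vset m) (expmed_weight \<epsilon> m n x \<alpha>)"
proof -
  let ?w = "expmed_weight \<epsilon> m n x \<alpha>" and ?xk = "x (midx n)" and ?A = "\<alpha> * m"
  have xk: "?xk \<in> {- m / 2..m / 2}"
    using is_dataset_in_Vset[OF ds] midx_bounds[OF \<open>odd n\<close>] by (simp add: Vset_def)
  obtain s where s: "- m / 2 \<le> s" "s + ?A \<le> m / 2" "?xk - ?A \<le> s" "s \<le> ?xk"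
  proof (cases "?xk + ?A \<le> m / 2")
    case True then show ?thesis using that[of ?xk] xk A by simp
  next
    case False then show ?thesis using that[of "m / 2 - ?A"] xk A by simp
  qed
  then have sV: "{s..s + ?A} \<subseteq> {- m / 2..m / 2}" by simp
  have w1: "?w l = 1" if "l \<in> {s..s + ?A}" for l
  proof -
    have "\<bar>l - ?xk\<bar> \<le> ?A" using that s(3,4) by (simp add: abs_le_iff)
    then have "ploss m n x \<alpha> l = 0" by (rule ploss_near_median[OF ds \<open>odd n\<close>])
    then show ?thesis by (simp add: expmed_weight_def)
  qed
  have "?A = integral {s..s + ?A} (\<lambda>_. 1)"
    using A by simp
  also have "\<dots> = integral {s..s + ?A} ?w"
    using w1 by (intro integral_cong) auto
  also have "\<dots> \<le> integral {- m / 2..m / 2} ?w"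
  proof (rule integral_subset_le[OF sV])
    show "?w integrable_on {- m / 2..m / 2}"
      using expmed_weight_integrable(1)[OF assms(1,2,3,5)] by (simp add: Vset_def)
    then show "?w integrable_on {s..s + ?A}"
      using sV by (rule integrable_subinterval_real)
  qed (simp add: expmed_weight_def)
  finally show ?thesis by (simp add: Vset_def)
qed

lemma expmed_weight_tail_le:
  assumes ctm: "in_CTM m n x" and "odd n" and "\<alpha> * m \<ge> 0" and "\<epsilon> \<ge> 0" and "m > 0"
    and lV: "l \<in> Vset m" and T: "T < real (ploss m n x \<alpha> l)"
  shows "expmed_weight \<epsilon> m n x \<alpha> l \<le> exp (- \<epsilon> * T / 4)
    * exp (- (\<epsilon> * real (midx n - 1) / (4 * m)) * max 0 (\<bar>l - x (midx n)\<bar> - \<alpha> * m))"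
proof -
  \<comment> \<open>Half of the exponent pays for the threshold T, the other half for the linear growth of the loss.\<close>
  define p where "p = real (ploss m n x \<alpha> l)"
  define D where "D = \<bar>l - x (midx n)\<bar> - \<alpha> * m"
  define c where "c = \<epsilon> * real (midx n - 1) / (4 * m)"
  have "c * D = \<epsilon> / (4 * m) * (real (midx n - 1) * D)"
    unfolding c_def by simp
  also have "\<dots> \<le> \<epsilon> / (4 * m) * (p * m)"
    using ploss_lower_bound[OF ctm \<open>odd n\<close> \<open>\<alpha> * m \<ge> 0\<close> lV] \<open>\<epsilon> \<ge> 0\<close> \<open>m > 0\<close>
    unfolding p_def D_def by (intro mult_left_mono) auto
  also have "\<dots> = \<epsilon> / 4 * p"
    using \<open>m > 0\<close> by simp
  finally have "c * max 0 D \<le> \<epsilon> / 4 * p"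
    using \<open>\<epsilon> \<ge> 0\<close> by (simp add: max_def p_def)
  moreover have "\<epsilon> * T / 4 \<le> \<epsilon> / 4 * p"
    using T \<open>\<epsilon> \<ge> 0\<close> unfolding p_def by (simp add: mult_left_mono)
  ultimately have "- (\<epsilon> / 2) * p \<le> - \<epsilon> * T / 4 + - c * max 0 D"
    by simp
  then show ?thesis
    unfolding expmed_weight_def p_def[symmetric] D_def[symmetric] c_def[symmetric] by (simp flip: exp_add)
qed

lemma integral_expmed_weight_outside_le:
  fixes T :: real
  assumes ctm: "in_CTM m n x" and "odd n" and "\<alpha> * m \<ge> 0" and "\<epsilon> > 0" and "m > 0" and k: "midx n \<ge> 2"
  defines "w \<equiv> expmed_weight \<epsilon> m n x \<alpha>" and "G \<equiv> {l. real (ploss m n x \<alpha> l) \<le> T}"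
  shows "integral (Vset m) w - integral (Vset m \<inter> G) w
    \<le> exp (- \<epsilon> * T / 4) * (2 * (\<alpha> * m) + 8 * m / (\<epsilon> * real (midx n - 1)))"
proof -
  define c where "c = \<epsilon> * real (midx n - 1) / (4 * m)"
  define u where "u l = exp (- \<epsilon> * T / 4) * exp (- c * max 0 (\<bar>l - x (midx n)\<bar> - \<alpha> * m))" for l
  have ds: "is_dataset m n x" using ctm in_CTM_def by blast
  have c: "c > 0" using assms unfolding c_def by simp
  have w_int: "w integrable_on Vset m" "w integrable_on Vset m \<inter> G"
    using expmed_weight_integrable[OF ds \<open>odd n\<close> \<open>\<alpha> * m \<ge> 0\<close> less_imp_le[OF \<open>\<epsilon> > 0\<close>]]
    unfolding w_def G_def by auto
  have restrict_int: "(\<lambda>l. if l \<in> G then w l else 0) integrable_on Vset m"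
    using w_int(2) by (simp add: integrable_restrict_Int Int_commute)
  have "integral (Vset m) w - integral (Vset m \<inter> G) w = integral (Vset m) (\<lambda>l. w l - (if l \<in> G then w l else 0))"
    using w_int restrict_int by (simp add: integral_diff integral_restrict_Int Int_commute)
  also have "\<dots> \<le> integral (Vset m) u"
  proof (rule integral_le)
    have "continuous_on UNIV u" unfolding u_def by (intro continuous_intros)
    then show "u integrable_on Vset m"
      unfolding Vset_def by (auto intro: integrable_continuous_interval continuous_on_subset)
    show "(\<lambda>l. w l - (if l \<in> G then w l else 0)) integrable_on Vset m"
      using w_int restrict_int by (intro integrable_diff) auto
    fix l assume "l \<in> Vset m"
    then show "w l - (if l \<in> G then w l else 0) \<le> u l"
      using expmed_weight_tail_le[OF ctm \<open>odd n\<close> \<open>\<alpha> * m \<ge> 0\<close> less_imp_le[OF \<open>\<epsilon> > 0\<close>] \<open>m > 0\<close>]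
      by (auto simp: u_def c_def w_def G_def)
  qed
  also have "\<dots> = exp (- \<epsilon> * T / 4) * integral (Vset m) (\<lambda>l. exp (- c * max 0 (\<bar>l - x (midx n)\<bar> - \<alpha> * m)))"
    unfolding u_def by simp
  also have "\<dots> \<le> exp (- \<epsilon> * T / 4) * (2 * (\<alpha> * m) + 2 / c)"
    unfolding Vset_def using c \<open>\<alpha> * m \<ge> 0\<close> by (intro mult_left_mono integral_exp_tent_le) auto
  also have "2 / c = 8 * m / (\<epsilon> * real (midx n - 1))"
    unfolding c_def by simp
  finally show ?thesis .
qed

lemma sample_size_lower_bounds:
  assumes "0 < \<beta>" "\<beta> < 1/3" "\<epsilon> < 1" "real n * \<epsilon> \<ge> 2 * ln (1/\<beta>)"
  shows "real n * \<epsilon> > 2" "n \<ge> 3"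
proof -
  have "ln 3 < ln (1/\<beta>)"
    using assms(1,2) by (subst ln_less_cancel_iff) (auto simp: field_simps)
  then show "real n * \<epsilon> > 2"
    using ln3_gt_1 assms(4) by linarith
  moreover have "real n * \<epsilon> \<le> real n"
    using assms(3) \<open>real n * \<epsilon> > 2\<close> by (cases "\<epsilon> \<le> 0") (auto simp: mult_left_le zero_less_mult_iff)
  ultimately show "n \<ge> 3" by linarith
qed

lemma tail_bound_le_beta_mass:
  assumes "0 < \<beta>" "\<beta> < 1/3" "0 < \<epsilon>" "odd n" "n \<ge> 3" "m > 0"
  shows "exp (- \<epsilon> * (20 / \<epsilon> * ln (1/\<beta>)) / 4) * (2 * (1 / (real n * \<epsilon>) * m) + 8 * m / (\<epsilon> * real (midx n - 1)))
    \<le> \<beta> * (1 / (real n * \<epsilon>) * m)"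
proof -
  define A where "A = 1 / (real n * \<epsilon>) * m"
  have "exp (- \<epsilon> * (20 / \<epsilon> * ln (1/\<beta>)) / 4) = exp (real 5 * ln \<beta>)"
    using \<open>0 < \<epsilon>\<close> \<open>0 < \<beta>\<close> by (simp add: ln_div)
  also have "\<dots> = \<beta> ^ 5"
    using \<open>0 < \<beta>\<close> by (simp only: exp_of_nat_mult exp_ln)
  finally have E: "exp (- \<epsilon> * (20 / \<epsilon> * ln (1/\<beta>)) / 4) = \<beta> ^ 5" .
  have "real n \<le> 3 * real (midx n - 1)"
    using two_midx_odd[OF \<open>odd n\<close>] \<open>n \<ge> 3\<close> by linarith
  then have "8 * m / (\<epsilon> * real (midx n - 1)) \<le> 8 * m / (\<epsilon> * real n / 3)"
    using assms by (intro divide_left_mono mult_pos_pos) auto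
  also have "\<dots> = 24 * A"
    unfolding A_def by (simp add: field_simps)
  finally have X: "8 * m / (\<epsilon> * real (midx n - 1)) \<le> 24 * A" .
  have "26 * \<beta> ^ 4 \<le> 1"
    using power_mono[of \<beta> "1/3" 4] assms(1,2) by (simp add: power_divide)
  then have "\<beta> * (26 * \<beta> ^ 4) \<le> \<beta> * 1"
    using assms(1) by (intro mult_left_mono) auto
  then have \<beta>5: "\<beta> ^ 5 * 26 \<le> \<beta>"
    by (simp add: eval_nat_numeral algebra_simps)
  have "\<beta> ^ 5 * (2 * A + 8 * m / (\<epsilon> * real (midx n - 1))) \<le> \<beta> ^ 5 * (26 * A)"
    using X assms(1) by (intro mult_left_mono) auto
  also have "\<dots> = (\<beta> ^ 5 * 26) * A"
    by simp
  also have "\<dots> \<le> \<beta> * A"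
    using \<beta>5 assms unfolding A_def by (intro mult_right_mono) auto
  finally show ?thesis
    unfolding E A_def .
qed

lemma expmed_concentration:
  fixes m \<beta> \<epsilon> :: real
  assumes m: "m > 0" and \<beta>: "0 < \<beta>" "\<beta> < 1/3" and \<epsilon>: "0 < \<epsilon>" "\<epsilon> < 1" and "odd n"
    and n: "real n * \<epsilon> \<ge> 2 * ln (1/\<beta>)" and ctm: "in_CTM m n x"
  defines "\<alpha> \<equiv> 1 / (real n * \<epsilon>)"
    and "G \<equiv> {l. real (ploss m n x (1 / (real n * \<epsilon>)) l) \<le> 20 / \<epsilon> * ln (1/\<beta>)}"
  shows "expmed_weight \<epsilon> m n x \<alpha> integrable_on Vset m"
    and "expmed_weight \<epsilon> m n x \<alpha> integrable_on Vset m \<inter> G"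
    and "1 - \<beta> \<le> expmed_prob \<epsilon> m n x \<alpha> G"
proof -
  define w where "w = expmed_weight \<epsilon> m n x \<alpha>"
  have ds: "is_dataset m n x" using ctm in_CTM_def by blast
  note n_bounds = sample_size_lower_bounds[OF \<beta> \<epsilon>(2) n]
  have A: "0 < \<alpha> * m" "\<alpha> * m \<le> m"
    using n_bounds m by (auto simp: \<alpha>_def field_simps)
  have k: "midx n \<ge> 2" using two_midx_odd[OF \<open>odd n\<close>] n_bounds(2) by linarith
  show "expmed_weight \<epsilon> m n x \<alpha> integrable_on Vset m"
    "expmed_weight \<epsilon> m n x \<alpha> integrable_on Vset m \<inter> G"
    using expmed_weight_integrable[OF ds \<open>odd n\<close> less_imp_le[OF A(1)] less_imp_le[OF \<epsilon>(1)]]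
    unfolding G_def \<alpha>_def by auto
  have mass: "\<alpha> * m \<le> integral (Vset m) w"
    using integral_expmed_weight_ge[OF ds \<open>odd n\<close> less_imp_le[OF A(1)] A(2) less_imp_le[OF \<epsilon>(1)]]
    unfolding w_def .
  have "integral (Vset m) w - integral (Vset m \<inter> G) w
      \<le> exp (- \<epsilon> * (20 / \<epsilon> * ln (1/\<beta>)) / 4) * (2 * (\<alpha> * m) + 8 * m / (\<epsilon> * real (midx n - 1)))"
    unfolding w_def G_def \<alpha>_def[symmetric] using A
    by (intro integral_expmed_weight_outside_le[OF ctm \<open>odd n\<close> _ \<epsilon>(1) m k]) simp
  also have "\<dots> \<le> \<beta> * (\<alpha> * m)"
    unfolding \<alpha>_def by (rule tail_bound_le_beta_mass[OF \<beta> \<epsilon>(1) \<open>odd n\<close> n_bounds(2) m])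
  also have "\<dots> \<le> \<beta> * integral (Vset m) w"
    using mass \<beta> by (intro mult_left_mono) auto
  finally have "(1 - \<beta>) * integral (Vset m) w \<le> integral (Vset m \<inter> G) w"
    by (simp add: algebra_simps)
  then show "1 - \<beta> \<le> expmed_prob \<epsilon> m n x \<alpha> G"
    using mass A unfolding expmed_prob_def w_def by (simp add: pos_le_divide_eq)
qed

theorem corollary7p10:
  shows "\<exists>C C'. C > 0 \<and> C' > 0 \<and>
    (\<forall>(m::real) (\<beta>::real) (\<epsilon>::real) (n::nat) (x::nat \<Rightarrow> real).
       m > 0 \<longrightarrow> 0 < \<beta> \<longrightarrow> \<beta> < 1/3 \<longrightarrow> 0 < \<epsilon> \<longrightarrow> \<epsilon> < 1 \<longrightarrow> odd n \<longrightarrow>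
       real n * \<epsilon> \<ge> C * ln (1/\<beta>) \<longrightarrow> in_CTM m n x \<longrightarrow>
       (let \<alpha> = 1 / (real n * \<epsilon>);
            G = {l. real (ploss m n x \<alpha> l) \<le> C' / \<epsilon> * ln (1/\<beta>)} in
        expmed_weight \<epsilon> m n x \<alpha> integrable_on Vset m \<and>
        expmed_weight \<epsilon> m n x \<alpha> integrable_on (Vset m \<inter> G) \<and>
        expmed_prob \<epsilon> m n x \<alpha> G \<ge> 1 - \<beta>))"
  unfolding Let_def using expmed_concentration
  by (intro exI[of _ 2] exI[of _ 20]) simp

end
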